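(* Let $r\ge2$. (1) Every $r$-large set is $r$-syndetic large. (2) Every $(2r-1)$-syndetic large set is $r$-large.
   Context: For $r\ge2$, $S\subset\mathbb N$ is $r$-large if every coloring of $\mathbb N$ with $r$ colors contains arbitrarily long monochromatic arithmetic progressions $a,a+n,\dots,a+(L-1)n$ with $n\in S$. A set $E\subset\mathbb N$ is syndetic if there is $q\ge1$ such that every interval of $q$ consecutive integers contains an element of $E$; the least such $q$ is its syndeticity constant. $S$ is $r$-syndetic large if every syndetic set with syndeticity constant at most $r$ contains arbitrarily long arithmetic progressions with common difference in $S$. *)

theory Defs
  imports Main
begin

text \<open>Convention: \<open>\<nat>\<close> denotes the positive integers {1,2,...}; sets and colourings
live on the positive naturals.\<close>

definition ap_in :: "nat set \<Rightarrow> nat \<Rightarrow> nat \<Rightarrow> nat \<Rightarrow> bool" where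
  "ap_in A a n L \<longleftrightarrow> (\<forall>i<L. a + i * n \<in> A)"

definition r_large :: "nat \<Rightarrow> nat set \<Rightarrow> bool" where
  "r_large r S \<longleftrightarrow> S \<subseteq> {1..} \<and>
     (\<forall>c :: nat \<Rightarrow> nat. (\<forall>x\<ge>1. c x < r) \<longrightarrow>
        (\<forall>L. \<exists>a n. a \<ge> 1 \<and> n \<in> S \<and> (\<forall>i<L. c (a + i * n) = c a)))"

definition syndetic_with :: "nat \<Rightarrow> nat set \<Rightarrow> bool" where
  "syndetic_with q E \<longleftrightarrow> q \<ge> 1 \<and> (\<forall>m\<ge>1. \<exists>x\<in>E. m \<le> x \<and> x < m + q)"

definition syndetic :: "nat set \<Rightarrow> bool" where
  "syndetic E \<longleftrightarrow> E \<subseteq> {1..} \<and> (\<exists>q. syndetic_with q E)"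

definition syndeticity_constant :: "nat set \<Rightarrow> nat" where
  "syndeticity_constant E = (LEAST q. syndetic_with q E)"

definition r_syndetic_large :: "nat \<Rightarrow> nat set \<Rightarrow> bool" where
  "r_syndetic_large r S \<longleftrightarrow> S \<subseteq> {1..} \<and>
     (\<forall>E. syndetic E \<and> syndeticity_constant E \<le> r \<longrightarrow>
        (\<forall>L. \<exists>a n. n \<in> S \<and> ap_in E a n L))"

end

theory Submission
  imports Defs
begin

(* Both directions translate between colourings and syndetic sets.

   (1) A syndetic set E with syndeticity constant q <= r induces the "gap colouring"
       x |-> distance from x to the next element of E, which uses fewer than q colours.
       A monochromatic progression x_i of this colouring with common gap d gives the
       progression x_i + d inside E with the same common difference.

   (2) A colouring c with r colours is encoded as the set E_c = {r x + c x | x >= 1},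
       which is syndetic with constant at most 2r - 1.  Given a progression b + j n
       in E_c of length r L + 1, its every r-th term b + i (r n) is again in E_c;
       these terms share the residue b mod r, so by decoding
       c(b div r + i n) = b mod r for all i < L: a c-monochromatic progression
       with difference n. *)

lemma syndetic_with_syndeticity_constant:
  assumes "syndetic E"
  shows "syndetic_with (syndeticity_constant E) E"
proof -
  have "\<exists>q. syndetic_with q E" using assms unfolding syndetic_def by blast
  then show ?thesis unfolding syndeticity_constant_def by (rule LeastI_ex)
qed

lemma syndeticity_constant_le:
  assumes "syndetic_with q E"
  shows "syndeticity_constant E \<le> q"
  unfolding syndeticity_constant_def using assms by (rule Least_le)

definition gap :: "nat set \<Rightarrow> nat \<Rightarrow> nat" where
  "gap E x = (LEAST d. x + d \<in> E)"

lemma gap_bounded: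
  assumes "syndetic_with q E" and "x \<ge> 1"
  shows "x + gap E x \<in> E" and "gap E x < q"
proof -
  obtain y where y: "y \<in> E" "x \<le> y" "y < x + q"
    using assms unfolding syndetic_with_def by blast
  then have witness: "x + (y - x) \<in> E" by simp
  show "x + gap E x \<in> E"
    unfolding gap_def using witness by (rule LeastI)
  have "gap E x \<le> y - x"
    unfolding gap_def using witness by (rule Least_le)
  then show "gap E x < q" using y by linarith
qed

lemma gap_monochromatic_shift:
  assumes "syndetic_with q E" and "a \<ge> 1"
    and mono: "\<forall>i<L. gap E (a + i * n) = gap E a"
  shows "ap_in E (a + gap E a) n L"
  unfolding ap_in_def
proof (intro allI impI)
  fix i assume "i < L"
  have "a + i * n + gap E (a + i * n) \<in> E"
    using gap_bounded(1)[OF assms(1)] \<open>a \<ge> 1\<close> by simp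
  then show "a + gap E a + i * n \<in> E"
    using mono \<open>i < L\<close> by (simp add: ac_simps)
qed

text \<open>Part (1): apply \<open>r\<close>-largeness to the gap colouring of \<open>E\<close>.\<close>

theorem r_large_imp_r_syndetic_large:
  assumes "r_large r S"
  shows "r_syndetic_large r S"
  unfolding r_syndetic_large_def
proof (intro conjI allI impI)
  show "S \<subseteq> {1..}" using assms unfolding r_large_def by blast
next
  fix E L assume E: "syndetic E \<and> syndeticity_constant E \<le> r"
  let ?q = "syndeticity_constant E"
  have q: "syndetic_with ?q E"
    using E by (blast intro: syndetic_with_syndeticity_constant)
  have "\<forall>x\<ge>1. gap E x < r"
    using gap_bounded(2)[OF q] E by (meson less_le_trans)
  then obtain a n where a: "a \<ge> 1" and n: "n \<in> S"
    and mono: "\<forall>i<L. gap E (a + i * n) = gap E a"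
    using assms unfolding r_large_def by blast
  show "\<exists>a n. n \<in> S \<and> ap_in E a n L"
    using gap_monochromatic_shift[OF q a mono] n by blast
qed

text \<open>A colouring \<open>c\<close> with values below \<open>r\<close> is recorded by placing the point
  \<open>r x + c x\<close> in the block \<open>[r x, r x + r)\<close> of each positive \<open>x\<close>.\<close>

definition encoding :: "nat \<Rightarrow> (nat \<Rightarrow> nat) \<Rightarrow> nat set" where
  "encoding r c = {r * x + c x | x. x \<ge> 1}"

lemma encoding_decode:
  assumes c: "\<forall>x\<ge>1. c x < r" and e: "e \<in> encoding r c"
  shows "e div r \<ge> 1" and "c (e div r) = e mod r"
proof -
  obtain x where x: "x \<ge> 1" "e = r * x + c x"
    using e unfolding encoding_def by blast
  have "c x < r" using c x(1) by simp
  then have "e div r = x" "e mod r = c x" using x(2) by simp_all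
  then show "e div r \<ge> 1" and "c (e div r) = e mod r" using x(1) by simp_all
qed

lemma encoding_positive:
  assumes "r \<ge> 1"
  shows "encoding r c \<subseteq> {1..}"
  using assms unfolding encoding_def by (auto intro: order_trans[OF _ le_add1])

text \<open>Every window of length \<open>2r - 1\<close> starting at \<open>m \<ge> 1\<close> contains the encoding point of
  the block \<open>x = \<lceil>m / r\<rceil>\<close>.\<close>

lemma encoding_syndetic_with:
  assumes r: "r \<ge> 1" and c: "\<forall>x\<ge>1. c x < r"
  shows "syndetic_with (2 * r - 1) (encoding r c)"
  unfolding syndetic_with_def
proof (intro conjI allI impI)
  show "1 \<le> 2 * r - 1" using r by simp
next
  fix m :: nat assume m: "m \<ge> 1"
  define x where "x = (m + r - 1) div r"
  have block: "m \<le> r * x" "r * x \<le> m + r - 1"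
  proof -
    have "r * x + (m + r - 1) mod r = m + r - 1"
      unfolding x_def by (rule mult_div_mod_eq)
    moreover have "(m + r - 1) mod r < r" using r by simp
    ultimately show "m \<le> r * x" "r * x \<le> m + r - 1" by linarith+
  qed
  have "x \<ge> 1" using block(1) m by (cases x) auto
  then have "r * x + c x \<in> encoding r c" and "c x < r"
    using c unfolding encoding_def by auto
  with block show "\<exists>e\<in>encoding r c. m \<le> e \<and> e < m + (2 * r - 1)"
    by (intro bexI[of _ "r * x + c x"]) auto
qed

lemma encoding_syndetic:
  assumes "r \<ge> 1" and "\<forall>x\<ge>1. c x < r"
  shows "syndetic (encoding r c)" and "syndeticity_constant (encoding r c) \<le> 2 * r - 1"
  using encoding_syndetic_with[OF assms] encoding_positive[OF assms(1)]
  unfolding syndetic_def by (auto intro: syndeticity_constant_le)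

lemma ap_in_every_kth:
  assumes "ap_in A a n (k * L + 1)"
  shows "ap_in A a (k * n) (L + 1)"
  unfolding ap_in_def
proof (intro allI impI)
  fix i assume "i < L + 1"
  then have "i * k \<le> L * k" by simp
  then have "i * k < k * L + 1" by (simp add: mult.commute le_imp_less_Suc)
  then have "a + (i * k) * n \<in> A" using assms unfolding ap_in_def by blast
  then show "a + i * (k * n) \<in> A" by (simp add: ac_simps)
qed

text \<open>A progression in the encoding with difference \<open>r n\<close> decodes to a
  \<open>c\<close>-monochromatic progression with difference \<open>n\<close>: all its terms have the same
  residue mod \<open>r\<close>, and their quotients advance by \<open>n\<close>.\<close>

lemma encoding_progression_decode:
  assumes r: "r \<ge> 1" and c: "\<forall>x\<ge>1. c x < r"
    and ap: "ap_in (encoding r c) b (r * n) (L + 1)"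
  shows "b div r \<ge> 1" and "\<forall>i<L. c (b div r + i * n) = c (b div r)"
proof -
  have progression_term: "b + (i * n) * r \<in> encoding r c" if "i \<le> L" for i
  proof -
    have "b + i * (r * n) \<in> encoding r c"
      using ap that unfolding ap_in_def by (simp add: le_imp_less_Suc)
    then show ?thesis by (simp add: algebra_simps)
  qed
  have b: "b \<in> encoding r c" using progression_term[of 0] by simp
  show "b div r \<ge> 1" using encoding_decode(1)[OF c b] .
  show "\<forall>i<L. c (b div r + i * n) = c (b div r)"
  proof (intro allI impI)
    fix i assume "i < L"
    have shifted: "b + (i * n) * r \<in> encoding r c"
      using progression_term \<open>i < L\<close> by simp
    have "(b + (i * n) * r) div r = b div r + i * n" and "(b + (i * n) * r) mod r = b mod r"
      using r by simp_all
    then show "c (b div r + i * n) = c (b div r)"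
      using encoding_decode(2)[OF c shifted] encoding_decode(2)[OF c b] by simp
  qed
qed

text \<open>Part (2): apply \<open>(2r - 1)\<close>-syndetic largeness to the encoding of \<open>c\<close>, with
  progressions of length \<open>r L + 1\<close>, and decode every \<open>r\<close>-th term.\<close>

theorem r_syndetic_large_imp_r_large:
  assumes r: "r \<ge> 1" and S: "r_syndetic_large (2 * r - 1) S"
  shows "r_large r S"
  unfolding r_large_def
proof (intro conjI allI impI)
  show "S \<subseteq> {1..}" using S unfolding r_syndetic_large_def by blast
next
  fix c :: "nat \<Rightarrow> nat" and L assume c: "\<forall>x\<ge>1. c x < r"
  have "\<forall>E. syndetic E \<and> syndeticity_constant E \<le> 2 * r - 1 \<longrightarrow>
          (\<forall>L'. \<exists>b n. n \<in> S \<and> ap_in E b n L')"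
    using S unfolding r_syndetic_large_def by (rule conjunct2)
  then obtain b n where n: "n \<in> S" and ap: "ap_in (encoding r c) b n (r * L + 1)"
    using encoding_syndetic[OF r c] by blast
  note decoded = encoding_progression_decode[OF r c ap_in_every_kth[OF ap]]
  show "\<exists>a n. a \<ge> 1 \<and> n \<in> S \<and> (\<forall>i<L. c (a + i * n) = c a)"
    using decoded n by (intro exI[of _ "b div r"] exI[of _ n]) simp
qed

theorem mainTheorem20:
  fixes r :: nat
  assumes "r \<ge> 2"
  shows "(\<forall>S. r_large r S \<longrightarrow> r_syndetic_large r S)
       \<and> (\<forall>S. r_syndetic_large (2 * r - 1) S \<longrightarrow> r_large r S)"
proof -
  have "r \<ge> 1" using assms by simp
  then show ?thesis
    using r_large_imp_r_syndetic_large r_syndetic_large_imp_r_large[OF \<open>r \<ge> 1\<close>] by blast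
qed

end
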